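(* Let $W$ be a (1-safe) DAW-net and $\mathrm{pddl}(W)$ its encoding into a planning domain with transition function $\gamma$. Then: (1) if $(M,\eta)\xrightarrow{t}(M',\eta')$ is a valid firing of $W$, then there is a ground action $a_t$ of $\alpha_t$ such that $(\Psi(M,\eta),a_t,\Psi(M',\eta'))\in\gamma$ (i.e. $\gamma(\Psi(M,\eta),a_t)$ is defined and equals $\Psi(M',\eta')$); (2) if there is a ground action $a_t$ of $\alpha_t$ with $(s,a_t,s')\in\gamma$, then $\Psi^{-1}(s)\xrightarrow{t}\Psi^{-1}(s')$ is a valid firing of $W$.
   Context: **Data model and guards.** $\mathcal{D}=(\mathcal{V},\Delta,\mathrm{dm},\mathrm{ord})$: variables $\mathcal{V}$; domains $\Delta_i$ (not necessarily disjoint), $\mathrm{dm}$ total surjective assigning each variable its finite domain; $\mathrm{ord}$ partial, giving partial orders $\le_{\Delta_i}$ on some domains. Assignments: partial functions $\eta$ with $\eta(v)\in\mathrm{dm}(v)$. Guards $\Phi::=\mathit{true}\mid\mathrm{def}(v)\mid t_1=t_2\mid t_1\le t_2\mid\neg\Phi\mid\Phi\wedge\Phi$, $t_i\in\mathcal{V}\cup\bigcup_i\Delta_i$; with $t[\eta]=\eta(t)$ for variables on which $\eta$ is defined and $t$ otherwise: $\mathrm{def}(v)$ iff $\eta(v)$ defined; $t_1=t_2$ iff $t_1[\eta],t_2[\eta]$ are equal constants; $t_1\le t_2$ iff both lie in some $\Delta_i$ with $\mathrm{ord}(\Delta_i)$ defined and $t_1[\eta]\le_{\Delta_i}t_2[\eta]$.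 **DAW-nets.** $W=\langle\mathcal{D},(P,T,F),\mathrm{wr},\mathrm{gd}\rangle$: workflow Petri net with places $\mathit{start},\mathit{sink}$, presets ${}^\bullet t$, postsets $t^\bullet$; $\mathrm{wr}(t)$ a partial function from $\mathcal{V}$ with $\mathrm{wr}(t)(v)\subseteq\mathrm{dm}(v)$; $\mathrm{gd}(t)$ a guard. A firing $(M,\eta)\xrightarrow{t}(M',\eta')$ is valid iff $\{p\mid M(p)>0\}\supseteq{}^\bullet t$; $\mathcal{D},\eta\models\mathrm{gd}(t)$; $M'(p)=M(p)-1$ on ${}^\bullet t\setminus t^\bullet$, $M(p)+1$ on $t^\bullet\setminus{}^\bullet t$, else $M(p)$; $\mathrm{dom}(\eta')=\mathrm{dom}(\eta)\cup\{v\mid\mathrm{wr}(t)(v)\ne\emptyset\}\setminus\{v\mid\mathrm{wr}(t)(v)=\emptyset\}$, $\eta'(v)\in\mathrm{wr}(t)(v)$ for $v\in\mathrm{dom}(\mathrm{wr}(t))$, else $\eta'(v)=\eta(v)$. Standing restriction: $W$ is 1-safe, so markings take values in $\{0,1\}$; $\mathcal{V}'$ is the finite set of variables appearing in $W$, and states have $\mathrm{dom}(\eta)\subseteq\mathcal{V}'$. **State-variable planning.** A state assigns each state variable a value in its range. Preconditions are Boolean combinations of $\mathrm{true}$, atoms $r(z_1,\dots,z_n)$ for rigid relations $r$, and $z_1=z_2$, with $z_j$ constants, parameters or state variables (state variables evaluated in the current state). An action template $\alpha$ has head $\mathit{act}(z_1,\dots,z_k)$ with parameters over finite ranges, precondition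 $\mathrm{pre}(\alpha)$, effects $\mathrm{eff}(\alpha)$ (assignments $v\leftarrow z$); ground actions substitute constants for parameters. $\gamma(s,a)$ is defined iff $\mathrm{pre}(a)$ holds in $s$, and then $\gamma(s,a)=\{(v,w)\mid v\leftarrow w\in\mathrm{eff}(a)\}\cup\{(v,w)\in s\mid v$ not assigned in $\mathrm{eff}(a)\}$; write $(s,a,s')\in\gamma$ for $\gamma(s,a)=s'$. **Encoding $\mathrm{pddl}(W)$.** State variables: $v\in\mathcal{V}'$ with range $\mathrm{dm}(v)\cup\{\mathrm{null}\}$; Boolean $p\in P$. Rigid relations: $\mathrm{ord}=\bigcup_i\{(o,o')\in\Delta_i^2\mid o\le_{\Delta_i}o'\}$; for $t\in T$, $v\in\mathrm{dom}(\mathrm{wr}(t))$: $wr_{t,v}=\mathrm{wr}(t)(v)$ if nonempty, $\{\mathrm{null}\}$ otherwise. Guard translation: $[\mathit{true}]=\mathrm{true}$, $[\mathrm{def}(v)]=\neg(v=\mathrm{null})$, $[v=t_2]=\neg(v=\mathrm{null})\wedge(v=t_2)$, $[t_1\le t_2]=\mathrm{ord}(t_1,t_2)$, $[\neg\Phi]=\neg[\Phi]$, $[\Phi_1\wedge\Phi_2]=[\Phi_1]\wedge[\Phi_2]$. For $t\in T$ with $\mathrm{dom}(\mathrm{wr}(t))=\{v_1,\dots,v_k\}$, template $\alpha_t$: head $t(z_{v_1},\dots,z_{v_k})$; precondition $[\mathrm{gd}(t)]\wedge\bigwedge_i wr_{t,v_i}(z_{v_i})\wedge\bigwedge_{p\in{}^\bullet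 t}(p=\mathrm{true})$; effects $v_i\leftarrow z_{v_i}$, $p\leftarrow\mathrm{false}$ for $p\in{}^\bullet t\setminus t^\bullet$, $p\leftarrow\mathrm{true}$ for $p\in t^\bullet$. **Mapping.** $\Psi(M,\eta)$ maps $v\mapsto\eta(v)$ if defined and $v\mapsto\mathrm{null}$ otherwise ($v\in\mathcal{V}'$), and $p\mapsto\mathrm{true}$ if $M(p)>0$, $p\mapsto\mathrm{false}$ if $M(p)=0$. Under 1-safety $\Psi$ is a bijection between states of $W$ and planning states; $\Psi^{-1}$ is its inverse. *)

theory Defs
  imports Main
begin

record ('v,'c) datamodel =
  dvars :: "'v set"
  ddoms :: "'c set set"
  ddm   :: "'v \<Rightarrow> 'c set"
  dord  :: "'c set \<Rightarrow> 'c rel option"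

definition wf_datamodel :: "('v,'c) datamodel \<Rightarrow> bool" where
  "wf_datamodel D \<longleftrightarrow>
     ddm D ` dvars D = ddoms D \<and>
     (\<forall>A\<in>ddoms D. finite A) \<and>
     (\<forall>A R. dord D A = Some R \<longrightarrow>
        A \<in> ddoms D \<and> R \<subseteq> A \<times> A \<and> refl_on A R \<and> antisym R \<and> trans R)"

datatype ('v,'c) gterm = Var 'v | Const 'c

datatype ('v,'c) guard =
    GTrue
  | GDef 'v
  | GEq "('v,'c) gterm" "('v,'c) gterm"
  | GLe "('v,'c) gterm" "('v,'c) gterm"
  | GNot "('v,'c) guard"
  | GAnd "('v,'c) guard" "('v,'c) guard"

(* t[eta]: the constant value if t is a constant or a defined variable; None means
   t[eta] is the (undefined) variable itself, i.e. not a constant *)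
fun tval :: "('v \<rightharpoonup> 'c) \<Rightarrow> ('v,'c) gterm \<Rightarrow> 'c option" where
  "tval \<eta> (Var v) = \<eta> v"
| "tval \<eta> (Const c) = Some c"

fun gholds :: "('v,'c) datamodel \<Rightarrow> ('v \<rightharpoonup> 'c) \<Rightarrow> ('v,'c) guard \<Rightarrow> bool" where
  "gholds D \<eta> GTrue = True"
| "gholds D \<eta> (GDef v) = (\<eta> v \<noteq> None)"
| "gholds D \<eta> (GEq t1 t2) = (\<exists>c1 c2. tval \<eta> t1 = Some c1 \<and> tval \<eta> t2 = Some c2 \<and> c1 = c2)"
| "gholds D \<eta> (GLe t1 t2) = (\<exists>c1 c2 A R. tval \<eta> t1 = Some c1 \<and> tval \<eta> t2 = Some c2 \<and>
      A \<in> ddoms D \<and> dord D A = Some R \<and> c1 \<in> A \<and> c2 \<in> A \<and> (c1, c2) \<in> R)"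
| "gholds D \<eta> (GNot g) = (\<not> gholds D \<eta> g)"
| "gholds D \<eta> (GAnd g1 g2) = (gholds D \<eta> g1 \<and> gholds D \<eta> g2)"

fun tvars :: "('v,'c) gterm \<Rightarrow> 'v set" where
  "tvars (Var v) = {v}" | "tvars (Const c) = {}"

fun gvars :: "('v,'c) guard \<Rightarrow> 'v set" where
  "gvars GTrue = {}"
| "gvars (GDef v) = {v}"
| "gvars (GEq t1 t2) = tvars t1 \<union> tvars t2"
| "gvars (GLe t1 t2) = tvars t1 \<union> tvars t2"
| "gvars (GNot g) = gvars g"
| "gvars (GAnd g1 g2) = gvars g1 \<union> gvars g2"

record ('v,'c,'p,'t) dawnet =
  dmod   :: "('v,'c) datamodel"
  places :: "'p set"
  trans  :: "'t set"
  flow_in  :: "('p \<times> 't) set"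
  flow_out :: "('t \<times> 'p) set"
  pstart :: 'p
  psink  :: 'p
  wr :: "'t \<Rightarrow> 'v \<rightharpoonup> 'c set"
  gd :: "'t \<Rightarrow> ('v,'c) guard"

definition preset :: "('v,'c,'p,'t) dawnet \<Rightarrow> 't \<Rightarrow> 'p set" where
  "preset W t = {p. (p, t) \<in> flow_in W}"

definition postset :: "('v,'c,'p,'t) dawnet \<Rightarrow> 't \<Rightarrow> 'p set" where
  "postset W t = {p. (t, p) \<in> flow_out W}"

definition net_edges :: "('v,'c,'p,'t) dawnet \<Rightarrow> ('p + 't) rel" where
  "net_edges W = {(Inl p, Inr t) | p t. (p, t) \<in> flow_in W} \<union> {(Inr t, Inl p) | t p. (t, p) \<in> flow_out W}"

definition workflow_net :: "('v,'c,'p,'t) dawnet \<Rightarrow> bool" where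
  "workflow_net W \<longleftrightarrow>
     finite (places W) \<and> finite (trans W) \<and>
     flow_in W \<subseteq> places W \<times> trans W \<and> flow_out W \<subseteq> trans W \<times> places W \<and>
     pstart W \<in> places W \<and> psink W \<in> places W \<and>
     (\<forall>t. (t, pstart W) \<notin> flow_out W) \<and> (\<forall>t. (psink W, t) \<notin> flow_in W) \<and>
     (\<forall>n \<in> Inl ` places W \<union> Inr ` trans W.
        (Inl (pstart W), n) \<in> (net_edges W)\<^sup>* \<and> (n, Inl (psink W)) \<in> (net_edges W)\<^sup>*)"

definition daw_net :: "('v,'c,'p,'t) dawnet \<Rightarrow> bool" where
  "daw_net W \<longleftrightarrow> wf_datamodel (dmod W) \<and> workflow_net W \<and>
     (\<forall>t v S. wr W t v = Some S \<longrightarrow> v \<in> dvars (dmod W) \<and> S \<subseteq> ddm (dmod W) v) \<and>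
     (\<forall>t. finite (dom (wr W t))) \<and>
     (\<forall>t. gvars (gd W t) \<subseteq> dvars (dmod W))"

definition netvars :: "('v,'c,'p,'t) dawnet \<Rightarrow> 'v set" where
  "netvars W = (\<Union>t\<in>trans W. dom (wr W t) \<union> gvars (gd W t))"

type_synonym ('p,'v,'c) nstate = "('p \<Rightarrow> nat) \<times> ('v \<rightharpoonup> 'c)"

definition valid_firing :: "('v,'c,'p,'t) dawnet \<Rightarrow> ('p,'v,'c) nstate \<Rightarrow> 't \<Rightarrow> ('p,'v,'c) nstate \<Rightarrow> bool" where
  "valid_firing W st t st' \<longleftrightarrow> (case st of (M, \<eta>) \<Rightarrow> case st' of (M', \<eta>') \<Rightarrow>
     t \<in> trans W \<and>
     preset W t \<subseteq> {p. M p > 0} \<and>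
     gholds (dmod W) \<eta> (gd W t) \<and>
     (\<forall>p. M' p = (if p \<in> preset W t - postset W t then M p - 1
                  else if p \<in> postset W t - preset W t then M p + 1 else M p)) \<and>
     (\<forall>v. case wr W t v of
            None \<Rightarrow> \<eta>' v = \<eta> v
          | Some S \<Rightarrow> (if S = {} then \<eta>' v = None else (\<exists>c\<in>S. \<eta>' v = Some c))))"

definition initial_state :: "('v,'c,'p,'t) dawnet \<Rightarrow> ('p,'v,'c) nstate" where
  "initial_state W = ((\<lambda>p. if p = pstart W then 1 else 0), Map.empty)"

definition reachable :: "('v,'c,'p,'t) dawnet \<Rightarrow> ('p,'v,'c) nstate \<Rightarrow> bool" where
  "reachable W st \<longleftrightarrow> (\<lambda>x y. \<exists>t. valid_firing W x t y)\<^sup>*\<^sup>* (initial_state W) st"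

definition one_safe :: "('v,'c,'p,'t) dawnet \<Rightarrow> bool" where
  "one_safe W \<longleftrightarrow> (\<forall>M \<eta>. reachable W (M, \<eta>) \<longrightarrow> (\<forall>p. M p \<le> 1))"

definition net_state :: "('v,'c,'p,'t) dawnet \<Rightarrow> ('p,'v,'c) nstate \<Rightarrow> bool" where
  "net_state W st \<longleftrightarrow> (\<forall>p. fst st p \<le> 1) \<and> dom (snd st) \<subseteq> netvars W"

datatype ('sv,'val,'par) pterm = PCst 'val | PPar 'par | PSv 'sv

datatype ('r,'sv,'val,'par) pform =
    PTrue
  | PRel 'r "('sv,'val,'par) pterm list"
  | PEq "('sv,'val,'par) pterm" "('sv,'val,'par) pterm"
  | PNot "('r,'sv,'val,'par) pform"
  | PAnd "('r,'sv,'val,'par) pform" "('r,'sv,'val,'par) pform"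

record ('n,'r,'sv,'val,'par) template =
  a_name   :: 'n
  a_params :: "'par set"
  a_range  :: "'par \<Rightarrow> 'val set"
  a_pre    :: "('r,'sv,'val,'par) pform"
  a_eff    :: "'sv \<rightharpoonup> ('sv,'val,'par) pterm"

record ('n,'r,'sv,'val,'par) gaction =
  g_head :: "'n \<times> ('par \<rightharpoonup> 'val)"
  g_pre  :: "('r,'sv,'val,'par) pform"
  g_eff  :: "'sv \<rightharpoonup> ('sv,'val,'par) pterm"

fun subst_term :: "('par \<Rightarrow> 'val) \<Rightarrow> ('sv,'val,'par) pterm \<Rightarrow> ('sv,'val,'par) pterm" where
  "subst_term \<sigma> (PPar z) = PCst (\<sigma> z)"
| "subst_term \<sigma> x = x"

fun subst_form :: "('par \<Rightarrow> 'val) \<Rightarrow> ('r,'sv,'val,'par) pform \<Rightarrow> ('r,'sv,'val,'par) pform" where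
  "subst_form \<sigma> PTrue = PTrue"
| "subst_form \<sigma> (PRel r ts) = PRel r (map (subst_term \<sigma>) ts)"
| "subst_form \<sigma> (PEq a b) = PEq (subst_term \<sigma> a) (subst_term \<sigma> b)"
| "subst_form \<sigma> (PNot f) = PNot (subst_form \<sigma> f)"
| "subst_form \<sigma> (PAnd f g) = PAnd (subst_form \<sigma> f) (subst_form \<sigma> g)"

definition ground :: "('n,'r,'sv,'val,'par) template \<Rightarrow> ('par \<Rightarrow> 'val) \<Rightarrow> ('n,'r,'sv,'val,'par) gaction" where
  "ground \<alpha> \<sigma> = \<lparr> g_head = (a_name \<alpha>, (Some \<circ> \<sigma>) |` a_params \<alpha>),
                   g_pre = subst_form \<sigma> (a_pre \<alpha>),
                   g_eff = map_option (subst_term \<sigma>) \<circ> a_eff \<alpha> \<rparr>"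

definition ground_action_of :: "('n,'r,'sv,'val,'par) template \<Rightarrow> ('n,'r,'sv,'val,'par) gaction \<Rightarrow> bool" where
  "ground_action_of \<alpha> a \<longleftrightarrow> (\<exists>\<sigma>. (\<forall>z\<in>a_params \<alpha>. \<sigma> z \<in> a_range \<alpha> z) \<and> a = ground \<alpha> \<sigma>)"

fun peval :: "('sv \<rightharpoonup> 'val) \<Rightarrow> ('sv,'val,'par) pterm \<Rightarrow> 'val option" where
  "peval s (PCst c) = Some c"
| "peval s (PSv x) = s x"
| "peval s (PPar z) = None"

fun pholds :: "('r \<Rightarrow> 'val list set) \<Rightarrow> ('sv \<rightharpoonup> 'val) \<Rightarrow> ('r,'sv,'val,'par) pform \<Rightarrow> bool" where
  "pholds I s PTrue = True"
| "pholds I s (PRel r ts) = (\<exists>cs. map (peval s) ts = map Some cs \<and> cs \<in> I r)"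
| "pholds I s (PEq a b) = (\<exists>c. peval s a = Some c \<and> peval s b = Some c)"
| "pholds I s (PNot f) = (\<not> pholds I s f)"
| "pholds I s (PAnd f g) = (pholds I s f \<and> pholds I s g)"

definition gamma :: "('r \<Rightarrow> 'val list set) \<Rightarrow> ('sv \<rightharpoonup> 'val) \<Rightarrow> ('n,'r,'sv,'val,'par) gaction \<Rightarrow> ('sv \<rightharpoonup> 'val) option" where
  "gamma I s a = (if pholds I s (g_pre a)
                  then Some (\<lambda>x. case g_eff a x of Some z \<Rightarrow> peval s z | None \<Rightarrow> s x)
                  else None)"

datatype ('v,'p) svar = SV 'v | SP 'p
datatype 'c pval = Val 'c | Null | Bool bool
datatype ('t,'v) rname = ROrd | RWr 't 'v

definition list_of :: "'a set \<Rightarrow> 'a list" where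
  "list_of A = (SOME xs. set xs = A)"

definition PConj :: "('r,'sv,'val,'par) pform list \<Rightarrow> ('r,'sv,'val,'par) pform" where
  "PConj fs = foldr PAnd fs PTrue"

fun enc_term :: "('v,'c) gterm \<Rightarrow> (('v,'p) svar, 'c pval, 'v) pterm" where
  "enc_term (Var v) = PSv (SV v)"
| "enc_term (Const c) = PCst (Val c)"

fun enc_guard :: "('v,'c) guard \<Rightarrow> (('t,'v) rname, ('v,'p) svar, 'c pval, 'v) pform" where
  "enc_guard GTrue = PTrue"
| "enc_guard (GDef v) = PNot (PEq (PSv (SV v)) (PCst Null))"
| "enc_guard (GEq t1 t2) = PAnd (PNot (PEq (enc_term t1) (PCst Null))) (PEq (enc_term t1) (enc_term t2))"
| "enc_guard (GLe t1 t2) = PRel ROrd [enc_term t1, enc_term t2]"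
| "enc_guard (GNot g) = PNot (enc_guard g)"
| "enc_guard (GAnd g1 g2) = PAnd (enc_guard g1) (enc_guard g2)"

definition rigid :: "('v,'c,'p,'t) dawnet \<Rightarrow> ('t,'v) rname \<Rightarrow> 'c pval list set" where
  "rigid W r = (case r of
      ROrd \<Rightarrow> {[Val o1, Val o2] | o1 o2. \<exists>A R. A \<in> ddoms (dmod W) \<and> dord (dmod W) A = Some R \<and>
                                              o1 \<in> A \<and> o2 \<in> A \<and> (o1, o2) \<in> R}
    | RWr t v \<Rightarrow> (case wr W t v of
                   None \<Rightarrow> {}
                 | Some S \<Rightarrow> (if S = {} then {[Null]} else {[Val c] | c. c \<in> S})))"

definition alpha :: "('v,'c,'p,'t) dawnet \<Rightarrow> 't \<Rightarrow> ('t, ('t,'v) rname, ('v,'p) svar, 'c pval, 'v) template" where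
  "alpha W t = \<lparr> a_name = t,
      a_params = dom (wr W t),
      a_range = (\<lambda>v. Val ` ddm (dmod W) v \<union> {Null}),
      a_pre = PAnd (enc_guard (gd W t))
               (PAnd (PConj (map (\<lambda>v. PRel (RWr t v) [PPar v]) (list_of (dom (wr W t)))))
                     (PConj (map (\<lambda>p. PEq (PSv (SP p)) (PCst (Bool True))) (list_of (preset W t))))),
      a_eff = (\<lambda>x. case x of
                 SV v \<Rightarrow> (if v \<in> dom (wr W t) then Some (PPar v) else None)
               | SP p \<Rightarrow> (if p \<in> postset W t then Some (PCst (Bool True))
                          else if p \<in> preset W t then Some (PCst (Bool False)) else None)) \<rparr>"

definition planning_state :: "('v,'c,'p,'t) dawnet \<Rightarrow> (('v,'p) svar \<rightharpoonup> 'c pval) \<Rightarrow> bool" where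
  "planning_state W s \<longleftrightarrow>
     dom s = SV ` netvars W \<union> SP ` places W \<and>
     (\<forall>v\<in>netvars W. \<exists>x\<in>Val ` ddm (dmod W) v \<union> {Null}. s (SV v) = Some x) \<and>
     (\<forall>p\<in>places W. \<exists>b. s (SP p) = Some (Bool b))"

definition Psi :: "('v,'c,'p,'t) dawnet \<Rightarrow> ('p,'v,'c) nstate \<Rightarrow> (('v,'p) svar \<rightharpoonup> 'c pval)" where
  "Psi W st = (\<lambda>x. case x of
      SV v \<Rightarrow> (if v \<in> netvars W then Some (case snd st v of Some c \<Rightarrow> Val c | None \<Rightarrow> Null) else None)
    | SP p \<Rightarrow> (if p \<in> places W then Some (Bool (fst st p > 0)) else None))"

definition Psi_inv :: "(('v,'p) svar \<rightharpoonup> 'c pval) \<Rightarrow> ('p,'v,'c) nstate" where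
  "Psi_inv s = ((\<lambda>p. if s (SP p) = Some (Bool True) then 1 else 0),
                (\<lambda>v. case s (SV v) of Some (Val c) \<Rightarrow> Some c | _ \<Rightarrow> None))"

end

theory Submission
  imports Defs
begin

(* The guard translation
   is exact once an undefined variable is encoded as null; the action parameters are exactly the
   values the firing writes (null for deleted variables); and on a 1-safe marking a place is
   determined by whether it is marked, so the Boolean effects p \<leftarrow> false on the preset and
   p \<leftarrow> true on the postset reproduce the token update.  From planning back to the net,
   1-safety of the new marking is invisible in the planning state; it holds because the new
   net state is reachable. *)

lemma set_list_of: "finite A \<Longrightarrow> set (list_of A) = A"
  unfolding list_of_def by (rule someI_ex) (rule finite_list)

lemma subst_form_PConj: "subst_form \<sigma> (PConj fs) = PConj (map (subst_form \<sigma>) fs)"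
  unfolding PConj_def by (induction fs) auto

lemma pholds_PConj: "pholds I s (PConj fs) \<longleftrightarrow> (\<forall>f\<in>set fs. pholds I s f)"
  unfolding PConj_def by (induction fs) auto

lemma subst_term_enc_term [simp]: "subst_term \<sigma> (enc_term t) = enc_term t"
  by (cases t) auto

lemma subst_form_enc_guard [simp]: "subst_form \<sigma> (enc_guard g) = enc_guard g"
  by (induction g) auto

definition pval_of :: "'c option \<Rightarrow> 'c pval" where
  "pval_of x = (case x of Some c \<Rightarrow> Val c | None \<Rightarrow> Null)"

lemma pval_of_simps [simp]: "pval_of (Some c) = Val c" "pval_of None = Null"
  by (simp_all add: pval_of_def)

lemma pval_of_eq_Null_iff [simp]:
  "pval_of x = Null \<longleftrightarrow> x = None" "Null = pval_of x \<longleftrightarrow> x = None"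
  by (cases x; auto)+

lemma pval_of_eq_Val_iff [simp]: "pval_of x = Val c \<longleftrightarrow> x = Some c"
  by (cases x) auto

lemma peval_enc_term:
  assumes "\<forall>v\<in>tvars t. s (SV v) = Some (pval_of (\<eta> v))"
  shows "peval s (enc_term t) = Some (pval_of (tval \<eta> t))"
  using assms by (cases t) auto

lemma pval_pair_in_rigid_ROrd:
  "[pval_of x1, pval_of x2] \<in> rigid W ROrd \<longleftrightarrow>
     (\<exists>c1 c2 A R. x1 = Some c1 \<and> x2 = Some c2 \<and> A \<in> ddoms (dmod W) \<and>
        dord (dmod W) A = Some R \<and> c1 \<in> A \<and> c2 \<in> A \<and> (c1, c2) \<in> R)"
  by (cases x1; cases x2) (simp_all add: rigid_def)

lemma pholds_PRel_pair:
  "pholds I s (PRel r [a, b]) \<longleftrightarrow>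
     (\<exists>x y. peval s a = Some x \<and> peval s b = Some y \<and> [x, y] \<in> I r)"
  by (simp add: Cons_eq_map_conv) blast

lemma pholds_enc_guard_iff:
  assumes "\<forall>v\<in>gvars g. s (SV v) = Some (pval_of (\<eta> v))"
  shows "pholds (rigid W) s (enc_guard g) \<longleftrightarrow> gholds (dmod W) \<eta> g"
  using assms
proof (induction g)
  case (GEq t1 t2)
  then have "peval s (enc_term t1) = Some (pval_of (tval \<eta> t1))"
    "peval s (enc_term t2) = Some (pval_of (tval \<eta> t2))"
    by (auto intro: peval_enc_term)
  then show ?case by (cases "tval \<eta> t1"; cases "tval \<eta> t2") auto
next
  case (GLe t1 t2)
  then have "peval s (enc_term t1) = Some (pval_of (tval \<eta> t1))"
    "peval s (enc_term t2) = Some (pval_of (tval \<eta> t2))"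
    by (auto intro: peval_enc_term)
  then show ?case
    by (simp del: pholds.simps add: pholds_PRel_pair pval_pair_in_rigid_ROrd)
qed auto

lemma singleton_in_rigid_RWr:
  assumes "wr W t v = Some S"
  shows "[x] \<in> rigid W (RWr t v) \<longleftrightarrow> (if S = {} then x = Null else \<exists>c\<in>S. x = Val c)"
  using assms by (auto simp: rigid_def)

lemma daw_net_workflow_net: "daw_net W \<Longrightarrow> workflow_net W"
  by (simp add: daw_net_def)

lemma preset_subset_places: "workflow_net W \<Longrightarrow> preset W t \<subseteq> places W"
  by (auto simp: workflow_net_def preset_def)

lemma postset_subset_places: "workflow_net W \<Longrightarrow> postset W t \<subseteq> places W"
  by (auto simp: workflow_net_def postset_def)

lemma finite_preset: "workflow_net W \<Longrightarrow> finite (preset W t)"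
  by (rule finite_subset[OF preset_subset_places]) (simp_all add: workflow_net_def)

lemma finite_dom_wr: "daw_net W \<Longrightarrow> finite (dom (wr W t))"
  by (simp add: daw_net_def)

lemma dom_wr_subset_netvars: "t \<in> trans W \<Longrightarrow> dom (wr W t) \<subseteq> netvars W"
  by (auto simp: netvars_def)

lemma gvars_gd_subset_netvars: "t \<in> trans W \<Longrightarrow> gvars (gd W t) \<subseteq> netvars W"
  by (auto simp: netvars_def)

definition action_effect ::
    "('v,'c,'p,'t) dawnet \<Rightarrow> 't \<Rightarrow> ('v \<Rightarrow> 'c pval) \<Rightarrow>
     (('v,'p) svar \<rightharpoonup> 'c pval) \<Rightarrow> (('v,'p) svar \<rightharpoonup> 'c pval)" where
  "action_effect W t \<sigma> s = (\<lambda>x. case x of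
      SV v \<Rightarrow> if v \<in> dom (wr W t) then Some (\<sigma> v) else s (SV v)
    | SP p \<Rightarrow> if p \<in> postset W t then Some (Bool True)
              else if p \<in> preset W t then Some (Bool False) else s (SP p))"

lemma gamma_ground_alpha:
  "gamma (rigid W) s (ground (alpha W t) \<sigma>) =
     (if pholds (rigid W) s (g_pre (ground (alpha W t) \<sigma>)) then Some (action_effect W t \<sigma> s) else None)"
  unfolding gamma_def
  by (auto simp: ground_def alpha_def action_effect_def fun_eq_iff split: svar.split)

lemma pholds_pre_ground_alpha_iff:
  assumes "daw_net W"
  shows "pholds (rigid W) s (g_pre (ground (alpha W t) \<sigma>)) \<longleftrightarrow>
           pholds (rigid W) s (enc_guard (gd W t)) \<and>
           (\<forall>v\<in>dom (wr W t). [\<sigma> v] \<in> rigid W (RWr t v)) \<and>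
           (\<forall>p\<in>preset W t. s (SP p) = Some (Bool True))"
  using set_list_of[OF finite_dom_wr[OF assms]]
    set_list_of[OF finite_preset[OF daw_net_workflow_net[OF assms]]]
  by (auto simp: ground_def alpha_def subst_form_PConj pholds_PConj Cons_eq_map_conv)

definition fire_marking :: "('v,'c,'p,'t) dawnet \<Rightarrow> 't \<Rightarrow> ('p \<Rightarrow> nat) \<Rightarrow> 'p \<Rightarrow> nat" where
  "fire_marking W t M p = (if p \<in> preset W t - postset W t then M p - 1
                            else if p \<in> postset W t - preset W t then M p + 1 else M p)"

lemma valid_firing_iff:
  "valid_firing W st t st' \<longleftrightarrow>
     t \<in> trans W \<and> preset W t \<subseteq> {p. 0 < fst st p} \<and> gholds (dmod W) (snd st) (gd W t) \<and>
     fst st' = fire_marking W t (fst st) \<and>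
     (\<forall>v. case wr W t v of
            None \<Rightarrow> snd st' v = snd st v
          | Some S \<Rightarrow> (if S = {} then snd st' v = None else \<exists>c\<in>S. snd st' v = Some c))"
  by (cases st; cases st') (auto simp: valid_firing_def fire_marking_def split: option.splits)

lemma reachable_valid_firing: "reachable W st \<Longrightarrow> valid_firing W st t st' \<Longrightarrow> reachable W st'"
  unfolding reachable_def by (erule rtranclp.rtrancl_into_rtrancl) blast

lemma fire_marking_pos_iff:
  assumes "preset W t \<subseteq> {p. 0 < M p}" and "\<forall>p. M p \<le> 1"
  shows "0 < fire_marking W t M p \<longleftrightarrow> p \<in> postset W t \<or> (p \<notin> preset W t \<and> 0 < M p)"
  using assms by (force simp: fire_marking_def)

lemma Psi_SV: "Psi W st (SV v) = (if v \<in> netvars W then Some (pval_of (snd st v)) else None)"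
  by (simp add: Psi_def pval_of_def)

lemma Psi_SP: "Psi W st (SP p) = (if p \<in> places W then Some (Bool (0 < fst st p)) else None)"
  by (simp add: Psi_def)

lemma Psi_inv_marking: "fst (Psi_inv s) p = (if s (SP p) = Some (Bool True) then 1 else 0)"
  by (simp add: Psi_inv_def)

lemma Psi_inv_assignment: "snd (Psi_inv s) v = (case s (SV v) of Some (Val c) \<Rightarrow> Some c | _ \<Rightarrow> None)"
  by (simp add: Psi_inv_def)

lemma planning_state_SV:
  assumes "planning_state W s" and "v \<in> netvars W"
  shows "s (SV v) = Some (pval_of (snd (Psi_inv s) v))"
  using assms by (auto simp: planning_state_def Psi_inv_assignment)

lemma action_effect_Psi:
  assumes W: "daw_net W" and st: "net_state W (M, \<eta>)" and fire: "valid_firing W (M, \<eta>) t (M', \<eta>')"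
  shows "action_effect W t (\<lambda>v. pval_of (\<eta>' v)) (Psi W (M, \<eta>)) = Psi W (M', \<eta>')"
proof
  fix x
  have wf: "workflow_net W" using W by (rule daw_net_workflow_net)
  have t: "t \<in> trans W" and enabled: "preset W t \<subseteq> {p. 0 < M p}" and M': "M' = fire_marking W t M"
    and writes: "\<And>v. case wr W t v of
                    None \<Rightarrow> \<eta>' v = \<eta> v
                  | Some S \<Rightarrow> (if S = {} then \<eta>' v = None else \<exists>c\<in>S. \<eta>' v = Some c)"
    using fire unfolding valid_firing_iff fst_conv snd_conv by blast+
  show "action_effect W t (\<lambda>v. pval_of (\<eta>' v)) (Psi W (M, \<eta>)) x = Psi W (M', \<eta>') x"
  proof (cases x)
    case (SV v)
    have "\<eta>' v = \<eta> v" if "v \<notin> dom (wr W t)"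
      using that writes[of v] by (auto split: option.splits)
    then show ?thesis
      using SV dom_wr_subset_netvars[OF t] by (auto simp: action_effect_def Psi_SV)
  next
    case (SP p)
    have "\<forall>p. M p \<le> 1" using st by (simp add: net_state_def)
    then have "0 < M' p \<longleftrightarrow> p \<in> postset W t \<or> (p \<notin> preset W t \<and> 0 < M p)"
      unfolding M' by (rule fire_marking_pos_iff[OF enabled])
    then show ?thesis
      using SP preset_subset_places[OF wf, of t] postset_subset_places[OF wf, of t]
      by (auto simp: action_effect_def Psi_SP)
  qed
qed

lemma Psi_simulates_firing:
  assumes W: "daw_net W" and st: "net_state W (M, \<eta>)" and fire: "valid_firing W (M, \<eta>) t (M', \<eta>')"
  shows "\<exists>a. ground_action_of (alpha W t) a \<and> gamma (rigid W) (Psi W (M, \<eta>)) a = Some (Psi W (M', \<eta>'))"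
proof -
  have t: "t \<in> trans W" and enabled: "preset W t \<subseteq> {p. 0 < M p}"
    and guard: "gholds (dmod W) \<eta> (gd W t)"
    and writes: "\<And>v. case wr W t v of
                    None \<Rightarrow> \<eta>' v = \<eta> v
                  | Some S \<Rightarrow> (if S = {} then \<eta>' v = None else \<exists>c\<in>S. \<eta>' v = Some c)"
    using fire unfolding valid_firing_iff fst_conv snd_conv by blast+
  define \<sigma> where "\<sigma> = (\<lambda>v. pval_of (\<eta>' v))"
  have written: "[\<sigma> v] \<in> rigid W (RWr t v)" if "v \<in> dom (wr W t)" for v
    using that writes[of v] by (auto simp: \<sigma>_def singleton_in_rigid_RWr)
  have "\<sigma> v \<in> Val ` ddm (dmod W) v \<union> {Null}" if wr: "wr W t v = Some S" for v S
  proof -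
    have "S \<subseteq> ddm (dmod W) v" using W wr by (auto simp: daw_net_def)
    then show ?thesis using wr writes[of v] by (auto simp: \<sigma>_def split: if_splits)
  qed
  then have grounded: "ground_action_of (alpha W t) (ground (alpha W t) \<sigma>)"
    by (auto simp: ground_action_of_def alpha_def)
  have "pholds (rigid W) (Psi W (M, \<eta>)) (enc_guard (gd W t))"
    using guard gvars_gd_subset_netvars[OF t]
    by (subst pholds_enc_guard_iff[where W = W and \<eta> = \<eta>]) (auto simp: Psi_SV)
  moreover have "\<forall>p\<in>preset W t. Psi W (M, \<eta>) (SP p) = Some (Bool True)"
    using enabled preset_subset_places[OF daw_net_workflow_net[OF W], of t] by (auto simp: Psi_SP)
  ultimately have pre: "pholds (rigid W) (Psi W (M, \<eta>)) (g_pre (ground (alpha W t) \<sigma>))"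
    using written by (simp add: pholds_pre_ground_alpha_iff[OF W])
  have "gamma (rigid W) (Psi W (M, \<eta>)) (ground (alpha W t) \<sigma>) = Some (Psi W (M', \<eta>'))"
    unfolding gamma_ground_alpha using pre action_effect_Psi[OF W st fire] by (simp add: \<sigma>_def)
  with grounded show ?thesis by blast
qed

lemma marking_Psi_inv_action_effect:
  assumes enabled: "\<forall>p\<in>preset W t. s (SP p) = Some (Bool True)"
    and safe: "\<forall>p. fire_marking W t (fst (Psi_inv s)) p \<le> 1"
  shows "fst (Psi_inv (action_effect W t \<sigma> s)) = fire_marking W t (fst (Psi_inv s))"
proof
  fix p
  let ?M = "fst (Psi_inv s)"
  have "preset W t \<subseteq> {p. 0 < ?M p}" using enabled by (auto simp: Psi_inv_marking)
  moreover have "\<forall>p. ?M p \<le> 1" by (simp add: Psi_inv_marking)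
  ultimately have "0 < fire_marking W t ?M p \<longleftrightarrow> p \<in> postset W t \<or> (p \<notin> preset W t \<and> 0 < ?M p)"
    by (rule fire_marking_pos_iff)
  then show "fst (Psi_inv (action_effect W t \<sigma> s)) p = fire_marking W t ?M p"
    using safe[rule_format, of p] by (auto simp: Psi_inv_marking action_effect_def)
qed

lemma assignment_Psi_inv_action_effect:
  assumes "\<forall>v\<in>dom (wr W t). [\<sigma> v] \<in> rigid W (RWr t v)"
  shows "case wr W t v of
           None \<Rightarrow> snd (Psi_inv (action_effect W t \<sigma> s)) v = snd (Psi_inv s) v
         | Some S \<Rightarrow> (if S = {} then snd (Psi_inv (action_effect W t \<sigma> s)) v = None
                     else \<exists>c\<in>S. snd (Psi_inv (action_effect W t \<sigma> s)) v = Some c)"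
proof (cases "wr W t v")
  case None
  then show ?thesis by (simp add: Psi_inv_assignment action_effect_def domIff)
next
  case (Some S)
  then have "[\<sigma> v] \<in> rigid W (RWr t v)" using assms by auto
  then have "if S = {} then \<sigma> v = Null else \<exists>c\<in>S. \<sigma> v = Val c"
    using Some by (simp add: singleton_in_rigid_RWr)
  then show ?thesis
    using Some by (auto simp: Psi_inv_assignment action_effect_def split: if_splits)
qed

lemma Psi_inv_simulates_action:
  assumes W: "daw_net W" and safe: "one_safe W" and s: "planning_state W s"
    and reach: "reachable W (Psi_inv s)" and t: "t \<in> trans W"
    and a: "ground_action_of (alpha W t) a" and step: "gamma (rigid W) s a = Some s'"
  shows "valid_firing W (Psi_inv s) t (Psi_inv s')"
proof -
  let ?M = "fst (Psi_inv s)" and ?\<eta> = "snd (Psi_inv s)"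
  obtain \<sigma> where a_eq: "a = ground (alpha W t) \<sigma>"
    using a by (auto simp: ground_action_of_def)
  have s': "s' = action_effect W t \<sigma> s" and "pholds (rigid W) s (g_pre a)"
    using step by (simp_all add: a_eq gamma_ground_alpha split: if_splits)
  then have guard_enc: "pholds (rigid W) s (enc_guard (gd W t))"
    and written: "\<forall>v\<in>dom (wr W t). [\<sigma> v] \<in> rigid W (RWr t v)"
    and enabled: "\<forall>p\<in>preset W t. s (SP p) = Some (Bool True)"
    by (simp_all add: a_eq pholds_pre_ground_alpha_iff[OF W])
  have "gholds (dmod W) ?\<eta> (gd W t)"
    using guard_enc pholds_enc_guard_iff[of "gd W t" s ?\<eta>] planning_state_SV[OF s]
      gvars_gd_subset_netvars[OF t] by auto
  moreover have "preset W t \<subseteq> {p. 0 < ?M p}"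
    using enabled by (auto simp: Psi_inv_marking)
  ultimately have fire: "valid_firing W (Psi_inv s) t (fire_marking W t ?M, snd (Psi_inv s'))"
    using t assignment_Psi_inv_action_effect[OF written]
    unfolding s' valid_firing_iff fst_conv snd_conv by blast
  have "\<forall>p. fire_marking W t ?M p \<le> 1"
    using reachable_valid_firing[OF reach fire] safe unfolding one_safe_def by blast
  then have "fst (Psi_inv s') = fire_marking W t ?M"
    using marking_Psi_inv_action_effect[OF enabled] by (simp add: s')
  then show ?thesis using fire by (metis prod.collapse)
qed

theorem mainTheorem8:
  fixes W :: "('v,'c,'p,'t) dawnet"
  assumes "daw_net W" and "one_safe W"
  shows "(\<forall>st t st'. net_state W st \<and> valid_firing W st t st' \<longrightarrow>
            (\<exists>a. ground_action_of (alpha W t) a \<and> gamma (rigid W) (Psi W st) a = Some (Psi W st')))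
       \<and> (\<forall>s t a s'. planning_state W s \<and> reachable W (Psi_inv s) \<and> t \<in> trans W \<and>
            ground_action_of (alpha W t) a \<and> gamma (rigid W) s a = Some s' \<longrightarrow>
            valid_firing W (Psi_inv s) t (Psi_inv s'))"
  using Psi_simulates_firing[OF assms(1)] Psi_inv_simulates_action[OF assms] by fastforce

end
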